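(* Let $n\ge 0$, let $T$ be a triangulation of a regular polygon with $n+3$ vertices and let $\alpha,\alpha'$ be positive roots. Then $\operatorname{Hom}_{\mathcal{C}_T}(\alpha,\alpha')\neq 0$ if and only if there exists $i\in\operatorname{Supp}\alpha\cap\operatorname{Supp}\alpha'$ such that, denoting by $v_1,v_2$ the endpoints of $-\alpha_i$ and by $u_1,u_2$ (resp. $u_1',u_2'$) the endpoints of $\alpha$ (resp. $\alpha'$), and ordering the vertices of the polygon counterclockwise starting at $v_1$ (for a suitable choice of the labelling of the endpoints), one has $v_1<u_1\le u_1'<v_2<u_2\le u_2'$. In this case $\operatorname{Hom}_{\mathcal{C}_T}(\alpha,\alpha')$ is one-dimensional.
   Context: Diagonals of the polygon are called roots; those in $T$ are negative roots, indexed by a set $I$ (the one indexed by $i$ written $-\alpha_i$), and the others positive roots. $\operatorname{Supp}\alpha$ is the set of $i\in I$ with $-\alpha_i$ crossing $\alpha$. A pivoting elementary move $P_v$ with pivot $v$ sends a positive root $[v,w]$ to the positive root $[v,w+1]$, vertices labelled cyclically counterclockwise. $\mathcal{C}_T$ is the $\mathbb{C}$-linear additive category whose objects are direct sums of positive roots, with $\operatorname{Hom}(\alpha,\alpha')$ the $\mathbb{C}$-span of sequences of pivoting elementary moves from $\alpha$ to $\alpha'$ modulo the mesh relations: whenever a diagonal is sent to another by two consecutive pivoting moves with distinct pivots in the two possible orders, the two composites are equal, with the convention that a composite whose intermediate diagonal is a border edge or a diagonal of $T$ is replaced by zero; paths differing only by such a change in two consecutive moves are identified. *)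

theory Defs
  imports Complex_Main
begin

(* Polygon with N vertices labelled 0,...,N-1 cyclically counterclockwise.
   A diagonal is a two-element set {a,b} of non-adjacent vertices. *)

(* counterclockwise distance from vertex a to vertex x, i.e. the position of x
   when the vertices are ordered counterclockwise starting at a *)
definition cpos :: "nat \<Rightarrow> nat \<Rightarrow> nat \<Rightarrow> nat" where
  "cpos N a x = (x + N - a) mod N"

definition is_diag :: "nat \<Rightarrow> nat set \<Rightarrow> bool" where
  "is_diag N d \<longleftrightarrow> (\<exists>a b. d = {a, b} \<and> a < N \<and> b < N \<and> a \<noteq> b
      \<and> b \<noteq> Suc a mod N \<and> a \<noteq> Suc b mod N)"

(* two diagonals cross iff their endpoints strictly interleave *)
definition crosses :: "nat \<Rightarrow> nat set \<Rightarrow> nat set \<Rightarrow> bool" where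
  "crosses N d e \<longleftrightarrow> (\<exists>a b c x. d = {a, b} \<and> e = {c, x}
      \<and> 0 < cpos N a c \<and> cpos N a c < cpos N a b
      \<and> 0 < cpos N b x \<and> cpos N b x < cpos N b a)"

definition triangulation :: "nat \<Rightarrow> nat set set \<Rightarrow> bool" where
  "triangulation N T \<longleftrightarrow> (\<forall>d\<in>T. is_diag N d) \<and> (\<forall>d\<in>T. \<forall>e\<in>T. \<not> crosses N d e)
      \<and> (\<forall>d. is_diag N d \<and> d \<notin> T \<longrightarrow> (\<exists>e\<in>T. crosses N d e))"

definition pos_root :: "nat \<Rightarrow> nat set set \<Rightarrow> nat set \<Rightarrow> bool" where
  "pos_root N T d \<longleftrightarrow> is_diag N d \<and> d \<notin> T"

(* Supp alpha: the negative roots (elements of T, which serve as the index set I)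
   crossing alpha *)
definition supp :: "nat \<Rightarrow> nat set set \<Rightarrow> nat set \<Rightarrow> nat set set" where
  "supp N T \<alpha> = {i \<in> T. crosses N i \<alpha>}"

definition pivot_move :: "nat \<Rightarrow> nat set set \<Rightarrow> nat set \<Rightarrow> nat \<Rightarrow> nat set \<Rightarrow> bool" where
  "pivot_move N T d v d' \<longleftrightarrow> pos_root N T d \<and> pos_root N T d'
      \<and> (\<exists>w. d = {v, w} \<and> v \<noteq> w \<and> d' = {v, Suc w mod N})"

fun move_path :: "nat \<Rightarrow> nat set set \<Rightarrow> nat set \<Rightarrow> nat list \<Rightarrow> nat set \<Rightarrow> bool" where
  "move_path N T d [] d' \<longleftrightarrow> pos_root N T d \<and> d' = d"
| "move_path N T d (v # vs) d' \<longleftrightarrow> (\<exists>d1. pivot_move N T d v d1 \<and> move_path N T d1 vs d')"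

(* basis vector of the free C-vector space on sequences of moves *)
definition delta :: "'a \<Rightarrow> 'a \<Rightarrow> complex" where
  "delta p = (\<lambda>q. if q = p then 1 else 0)"

definition cspan :: "('a \<Rightarrow> complex) set \<Rightarrow> ('a \<Rightarrow> complex) set" where
  "cspan S = {f. \<exists>F c. finite F \<and> F \<subseteq> S \<and> f = (\<lambda>x. \<Sum>g\<in>F. c g * g x)}"

(* generators of the mesh relations in the span of paths alpha -> alpha':
   a path ps reaching the diagonal [a,b], followed by the two ways of reaching
   [a+1,b+1] (pivot a then pivot b+1, or pivot b then pivot a+1), followed by qs.
   A composite through a non-positive-root intermediate diagonal (border edge or
   element of T) is not a valid path and is replaced by zero. *)
definition mesh_gens :: "nat \<Rightarrow> nat set set \<Rightarrow> nat set \<Rightarrow> nat set \<Rightarrow> (nat list \<Rightarrow> complex) set" where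
  "mesh_gens N T \<alpha> \<alpha>' = {g. \<exists>ps qs a b. a \<noteq> b \<and> move_path N T \<alpha> ps {a, b}
      \<and> move_path N T {Suc a mod N, Suc b mod N} qs \<alpha>'
      \<and> g = (\<lambda>x. (if move_path N T \<alpha> (ps @ [a, Suc b mod N] @ qs) \<alpha>'
                   then delta (ps @ [a, Suc b mod N] @ qs) x else 0)
                - (if move_path N T \<alpha> (ps @ [b, Suc a mod N] @ qs) \<alpha>'
                   then delta (ps @ [b, Suc a mod N] @ qs) x else 0))}"

(* Hom_{C_T}(alpha, alpha') = span of paths modulo span of mesh_gens *)
definition hom_nonzero :: "nat \<Rightarrow> nat set set \<Rightarrow> nat set \<Rightarrow> nat set \<Rightarrow> bool" where
  "hom_nonzero N T \<alpha> \<alpha>' \<longleftrightarrow>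
     (\<exists>ps. move_path N T \<alpha> ps \<alpha>' \<and> delta ps \<notin> cspan (mesh_gens N T \<alpha> \<alpha>'))"

definition hom_dim :: "nat \<Rightarrow> nat set set \<Rightarrow> nat set \<Rightarrow> nat set \<Rightarrow> nat" where
  "hom_dim N T \<alpha> \<alpha>' = (LEAST k. \<exists>S. finite S \<and> card S = k
      \<and> (\<forall>s\<in>S. move_path N T \<alpha> s \<alpha>')
      \<and> (\<forall>ps. move_path N T \<alpha> ps \<alpha>' \<longrightarrow> delta ps \<in> cspan (delta ` S \<union> mesh_gens N T \<alpha> \<alpha>')))"

definition hom_criterion :: "nat \<Rightarrow> nat set set \<Rightarrow> nat set \<Rightarrow> nat set \<Rightarrow> bool" where
  "hom_criterion N T \<alpha> \<alpha>' \<longleftrightarrow> (\<exists>i\<in>supp N T \<alpha> \<inter> supp N T \<alpha>'.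
      \<exists>v1 v2 u1 u2 u1' u2'. i = {v1, v2} \<and> \<alpha> = {u1, u2} \<and> \<alpha>' = {u1', u2'}
        \<and> 0 < cpos N v1 u1 \<and> cpos N v1 u1 \<le> cpos N v1 u1'
        \<and> cpos N v1 u1' < cpos N v1 v2 \<and> cpos N v1 v2 < cpos N v1 u2
        \<and> cpos N v1 u2 \<le> cpos N v1 u2')"

end

theory Submission
  imports Defs "HOL-Library.Function_Algebras"
begin

(* Lifting the endpoints of a positive root to integers x < y < x + N turns pivoting moves into
   unit steps of x or y, so a sequence of moves is a monotone lattice path, and a mesh relation
   exchanges two adjacent steps (killing the path if the corner it would pass is not a positive
   root).  Sorting the steps shows that a path is nonzero in Hom only if every lattice point of
   the rectangle it spans is a positive root, and that all such paths are then equal in Hom.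
   Conversely, for a rectangle of roots, summing the coefficients of all its paths is a linear
   form that kills the mesh relations, so the sorted path is nonzero and Hom is one-dimensional.
   Finally, a rectangle avoids T exactly when a diagonal of T crosses both alpha and alpha' in the
   interleaved position of the criterion; the nontrivial direction is an extremal argument using
   maximality of T. *)

lemma mod_eq_iff_eq_in_window:
  fixes a u v N :: nat
  assumes "a \<le> u" "u < a + N" "a \<le> v" "v < a + N"
  shows "u mod N = v mod N \<longleftrightarrow> u = v"
proof -
  have "u = v" if "u \<le> v" "v < u + N" "u mod N = v mod N" for u v :: nat
  proof -
    have "N dvd v - u" using that mod_eq_dvd_iff_nat[of u v N] by simp
    moreover have "v - u < N" using that by linarith
    ultimately show ?thesis using that(1) by (metis dvd_imp_le le_antisym not_gr0 not_less diff_is_0_eq)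
  qed
  then show ?thesis using assms by (metis add.commute le_cases less_le_trans not_less add_less_cancel_left)
qed

lemma cpos_eqI:
  assumes "a < N" "k < N" "(a + k) mod N = x"
  shows "cpos N a x = k"
proof (cases "a + k < N")
  case True
  then have "x + N - a = k + N" using assms by simp
  then show ?thesis using assms by (simp add: cpos_def)
next
  case False
  then have "x = a + k - N" using assms by (simp add: le_mod_geq)
  then show ?thesis using assms False by (simp add: cpos_def)
qed

lemma cpos_less: "0 < N \<Longrightarrow> cpos N a x < N"
  unfolding cpos_def by simp

lemma add_cpos_mod:
  assumes "a < N" "x < N"
  shows "(a + cpos N a x) mod N = x"
proof -
  have "(a + cpos N a x) mod N = (a + (x + N - a)) mod N"
    unfolding cpos_def by (simp add: mod_add_right_eq)
  also have "\<dots> = x" using assms by simp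
  finally show ?thesis .
qed

lemma cpos_mod_in_window:
  fixes a u v N :: nat
  assumes "a \<le> u" "u < a + N" "a \<le> v" "v < a + N"
  shows "cpos N (u mod N) (v mod N) = (if u \<le> v then v - u else v + N - u)"
proof (rule cpos_eqI)
  show "u mod N < N" "(if u \<le> v then v - u else v + N - u) < N" using assms by auto
  have "u + (if u \<le> v then v - u else v + N - u) = (if u \<le> v then v else v + N)" using assms by auto
  then show "(u mod N + (if u \<le> v then v - u else v + N - u)) mod N = v mod N"
    by (metis mod_add_left_eq mod_add_self2)
qed

lemma exists_lift_in_window:
  fixes a x N :: nat
  assumes "x < N"
  shows "\<exists>s. a \<le> s \<and> s < a + N \<and> s mod N = x"
proof (intro exI conjI)
  have "0 < N" using assms by simp
  then show "a \<le> a + cpos N (a mod N) x" "a + cpos N (a mod N) x < a + N"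
    by (simp_all add: cpos_less)
  show "(a + cpos N (a mod N) x) mod N = x"
    using add_cpos_mod[OF _ assms, of "a mod N"] \<open>0 < N\<close> by (simp add: mod_add_left_eq)
qed

lemma is_diag_lift_in_window:
  assumes "is_diag N e"
  obtains s t where "a \<le> s" "s < t" "t < a + N" "e = {s mod N, t mod N}"
proof -
  obtain x y where e: "e = {x, y}" "x < N" "y < N" "x \<noteq> y"
    using assms unfolding is_diag_def by blast
  obtain s t where st: "a \<le> s" "s < a + N" "s mod N = x" "a \<le> t" "t < a + N" "t mod N = y"
    using exists_lift_in_window[OF e(2)] exists_lift_in_window[OF e(3)] by metis
  then have "s \<noteq> t" using e(4) by blast
  then show ?thesis
    using that[of s t] that[of t s] st e(1) by (cases "s < t") (auto simp: insert_commute)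
qed

lemma crosses_doubleton:
  "crosses N {a, b} {c, x} \<longleftrightarrow>
    (let C = (\<lambda>a b c x. 0 < cpos N a c \<and> cpos N a c < cpos N a b \<and> 0 < cpos N b x \<and> cpos N b x < cpos N b a)
     in C a b c x \<or> C a b x c \<or> C b a c x \<or> C b a x c)"
  unfolding crosses_def Let_def doubleton_eq_iff by blast

lemma crosses_mod_iff_interleave:
  fixes a p r s t N :: nat
  assumes "a \<le> p" "p < r" "r < a + N" "a \<le> s" "s < a + N" "a \<le> t" "t < a + N"
  shows "crosses N {p mod N, r mod N} {s mod N, t mod N} \<longleftrightarrow>
     (p < s \<and> s < r \<and> (t < p \<or> r < t)) \<or> (p < t \<and> t < r \<and> (s < p \<or> r < s))"
proof -
  have w: "cpos N (u mod N) (v mod N) = (if u \<le> v then v - u else v + N - u)"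
    if "u \<in> {p, r, s, t}" "v \<in> {p, r, s, t}" for u v
    using assms that by (intro cpos_mod_in_window[of a]) auto
  show ?thesis unfolding crosses_doubleton Let_def
    by (simp only: w insert_iff simp_thms) (use assms in \<open>auto split: if_splits\<close>)
qed

text \<open>A positive root \<open>{x mod N, y mod N}\<close> is encoded by a lattice point \<open>(x, y)\<close> with
  \<open>x < y < x + N\<close>.  The pivoting move with pivot \<open>y mod N\<close> increments \<open>x\<close>, the one with pivot
  \<open>x mod N\<close> increments \<open>y\<close>; a sequence of moves is a word over \<open>bool\<close>, with \<open>True\<close> standing
  for a step of the first coordinate.\<close>

definition is_lift :: "nat \<Rightarrow> nat \<times> nat \<Rightarrow> bool" where
  "is_lift N q \<longleftrightarrow> fst q + 2 \<le> snd q \<and> snd q + 2 \<le> fst q + N"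

definition diag_of :: "nat \<Rightarrow> nat \<times> nat \<Rightarrow> nat set" where
  "diag_of N q = {fst q mod N, snd q mod N}"

definition root_point :: "nat \<Rightarrow> nat set set \<Rightarrow> nat \<times> nat \<Rightarrow> bool" where
  "root_point N T q \<longleftrightarrow> is_lift N q \<and> diag_of N q \<notin> T"

definition step :: "nat \<times> nat \<Rightarrow> bool \<Rightarrow> nat \<times> nat" where
  "step q b = (if b then (Suc (fst q), snd q) else (fst q, Suc (snd q)))"

definition pivot :: "nat \<Rightarrow> nat \<times> nat \<Rightarrow> bool \<Rightarrow> nat" where
  "pivot N q b = (if b then snd q mod N else fst q mod N)"

definition walk :: "nat \<times> nat \<Rightarrow> bool list \<Rightarrow> nat \<times> nat" where
  "walk q w = (fst q + count_list w True, snd q + count_list w False)"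

fun pivots :: "nat \<Rightarrow> nat \<times> nat \<Rightarrow> bool list \<Rightarrow> nat list" where
  "pivots N q [] = []"
| "pivots N q (b # w) = pivot N q b # pivots N (step q b) w"

fun root_walk :: "nat \<Rightarrow> nat set set \<Rightarrow> nat \<times> nat \<Rightarrow> bool list \<Rightarrow> bool" where
  "root_walk N T q [] \<longleftrightarrow> root_point N T q"
| "root_walk N T q (b # w) \<longleftrightarrow> root_point N T q \<and> root_walk N T (step q b) w"

lemma walk_Nil [simp]: "walk q [] = q"
  by (simp add: walk_def)

lemma walk_Cons [simp]: "walk q (b # w) = walk (step q b) w"
  by (simp add: walk_def step_def)

lemma walk_append: "walk q (u @ v) = walk (walk q u) v"
  by (simp add: walk_def)

lemma pivots_append: "pivots N q (u @ v) = pivots N q u @ pivots N (walk q u) v"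
  by (induction u arbitrary: q) auto

lemma length_pivots [simp]: "length (pivots N q w) = length w"
  by (induction w arbitrary: q) auto

lemma pivots_eq_Nil_iff [simp]: "pivots N q w = [] \<longleftrightarrow> w = []" "[] = pivots N q w \<longleftrightarrow> w = []"
  by (cases w; auto)+

lemma root_walk_root_point: "root_walk N T q w \<Longrightarrow> root_point N T q"
  by (cases w) auto

lemma root_walk_append:
  "root_walk N T q (u @ v) \<longleftrightarrow> root_walk N T q u \<and> root_walk N T (walk q u) v"
  by (induction u arbitrary: q) (auto dest: root_walk_root_point)

lemma root_walk_walk: "root_walk N T q w \<Longrightarrow> root_point N T (walk q w)"
  by (induction w arbitrary: q) auto

lemma is_lift_mod_neq: "is_lift N q \<Longrightarrow> fst q mod N \<noteq> snd q mod N"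
  unfolding is_lift_def using mod_eq_iff_eq_in_window[of "fst q" "fst q" N "snd q"] by auto

lemma is_diag_doubleton_iff:
  assumes "a < N" "b < N"
  shows "is_diag N {a, b} \<longleftrightarrow> a \<noteq> b \<and> b \<noteq> Suc a mod N \<and> a \<noteq> Suc b mod N"
  unfolding is_diag_def using assms by (auto simp: doubleton_eq_iff)

lemma is_diag_diag_of_iff:
  assumes "fst q < snd q" "snd q < fst q + N"
  shows "is_diag N (diag_of N q) \<longleftrightarrow> is_lift N q"
proof -
  obtain x y where q: "q = (x, y)" by (cases q)
  have lt: "x < y" "y < x + N" using assms q by auto
  have "is_diag N (diag_of N q) \<longleftrightarrow>
      x mod N \<noteq> y mod N \<and> y mod N \<noteq> Suc (x mod N) mod N \<and> x mod N \<noteq> Suc (y mod N) mod N"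
    unfolding diag_of_def q using lt by (simp add: is_diag_doubleton_iff)
  also have "\<dots> \<longleftrightarrow>
      x mod N \<noteq> y mod N \<and> y mod N \<noteq> Suc x mod N \<and> (x + N) mod N \<noteq> Suc y mod N"
    by (simp add: mod_Suc_eq)
  also have "\<dots> \<longleftrightarrow> x \<noteq> y \<and> y \<noteq> Suc x \<and> x + N \<noteq> Suc y"
    using lt mod_eq_iff_eq_in_window[of x x N y] mod_eq_iff_eq_in_window[of x y N "Suc x"]
      mod_eq_iff_eq_in_window[of "Suc x" "x + N" N "Suc y"] by auto
  also have "\<dots> \<longleftrightarrow> is_lift N q"
    unfolding is_lift_def q using assms q by auto
  finally show ?thesis .
qed

lemma pos_root_diag_of_iff: "is_lift N q \<Longrightarrow> pos_root N T (diag_of N q) \<longleftrightarrow> root_point N T q"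
  unfolding pos_root_def root_point_def
  using is_diag_diag_of_iff[of q N] by (auto simp: is_lift_def)

lemma pos_root_has_lift:
  assumes "pos_root N T \<alpha>"
  obtains p where "is_lift N p" "diag_of N p = \<alpha>"
proof -
  obtain a b where ab: "\<alpha> = {a, b}" "a < N" "b < N" "a \<noteq> b"
    using assms unfolding pos_root_def is_diag_def by blast
  define p where "p = (min a b, max a b)"
  have "diag_of N p = \<alpha>" unfolding diag_of_def p_def ab using ab by (auto simp: min_def max_def)
  moreover have "fst p < snd p" "snd p < fst p + N" unfolding p_def using ab by auto
  ultimately show ?thesis
    using that assms is_diag_diag_of_iff[of p N] unfolding pos_root_def by blast
qed

lemma diag_of_step: "diag_of N (step q b) = {pivot N q b, Suc (pivot N q (\<not> b)) mod N}"
  unfolding diag_of_def step_def pivot_def by (auto simp: mod_Suc_eq)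

lemma diag_of_pivots: "diag_of N q = {pivot N q b, pivot N q (\<not> b)}"
  unfolding diag_of_def pivot_def by auto

lemma pivot_move_diag_of_iff:
  assumes "is_lift N q"
  shows "pivot_move N T (diag_of N q) v d \<longleftrightarrow>
    (\<exists>b. v = pivot N q b \<and> d = diag_of N (step q b) \<and> root_point N T q \<and> root_point N T (step q b))"
    (is "?move \<longleftrightarrow> ?step")
proof
  assume ?move
  then obtain w where w: "diag_of N q = {v, w}" "v \<noteq> w" "d = {v, Suc w mod N}"
    and pos: "pos_root N T (diag_of N q)" "pos_root N T d"
    unfolding pivot_move_def by blast
  obtain b where b: "v = pivot N q b" "w = pivot N q (\<not> b)"
    using w(1,2) diag_of_pivots[of N q True] by (cases "v = pivot N q True") (auto simp: doubleton_eq_iff)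
  have "d = diag_of N (step q b)" using w(3) b by (simp add: diag_of_step)
  moreover have "is_lift N (step q b)"
    using pos(2) calculation is_diag_diag_of_iff[of "step q b" N] assms
    unfolding pos_root_def is_lift_def step_def by auto
  ultimately show ?step
    using b pos pos_root_diag_of_iff assms by blast
next
  assume ?step
  then obtain b where b: "v = pivot N q b" "d = diag_of N (step q b)"
    and roots: "root_point N T q" "root_point N T (step q b)" by blast
  have "pivot N q b \<noteq> pivot N q (\<not> b)"
    using is_lift_mod_neq[OF assms] by (cases b) (auto simp: pivot_def)
  then show ?move
    unfolding pivot_move_def using b roots diag_of_pivots[of N q b] diag_of_step[of N q b]
    pos_root_diag_of_iff[OF assms] pos_root_diag_of_iff[of N "step q b"]
    by (auto simp: root_point_def)
qed

lemma move_path_iff_root_walk: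
  assumes "is_lift N q"
  shows "move_path N T (diag_of N q) ps d \<longleftrightarrow>
    (\<exists>w. ps = pivots N q w \<and> root_walk N T q w \<and> d = diag_of N (walk q w))"
  using assms
proof (induction ps arbitrary: q)
  case Nil
  then show ?case using pos_root_diag_of_iff[OF Nil] by auto
next
  case (Cons v ps)
  show ?case
  proof
    assume "move_path N T (diag_of N q) (v # ps) d"
    then obtain d1 where "pivot_move N T (diag_of N q) v d1" and ps: "move_path N T d1 ps d"
      by auto
    then obtain b where b: "v = pivot N q b" "d1 = diag_of N (step q b)"
      "root_point N T q" "root_point N T (step q b)"
      using pivot_move_diag_of_iff[OF Cons.prems] by blast
    then obtain w where "ps = pivots N (step q b) w" "root_walk N T (step q b) w"
      "d = diag_of N (walk (step q b) w)"
      using Cons.IH[of "step q b"] ps by (auto simp: root_point_def)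
    then show "\<exists>w. v # ps = pivots N q w \<and> root_walk N T q w \<and> d = diag_of N (walk q w)"
      using b by (intro exI[of _ "b # w"]) auto
  next
    assume "\<exists>w. v # ps = pivots N q w \<and> root_walk N T q w \<and> d = diag_of N (walk q w)"
    then obtain b w where "v = pivot N q b" "ps = pivots N (step q b) w" "root_point N T q"
      and w: "root_walk N T (step q b) w" "d = diag_of N (walk (step q b) w)"
      by (metis list.distinct(1) neq_Nil_conv pivots.simps(2) list.inject root_walk.simps(2)
          walk_Cons pivots_eq_Nil_iff(2))
    moreover have "root_point N T (step q b)" using w(1) by (rule root_walk_root_point)
    ultimately show "move_path N T (diag_of N q) (v # ps) d"
      using pivot_move_diag_of_iff[OF Cons.prems] Cons.IH[of "step q b"]
      by (auto simp: root_point_def)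
  qed
qed

lemma pivots_inj: "root_walk N T q w \<Longrightarrow> pivots N q w = pivots N q w' \<Longrightarrow> w = w'"
proof (induction w arbitrary: q w')
  case Nil
  then show ?case by (metis length_0_conv length_pivots)
next
  case (Cons b w)
  obtain b' w'' where w': "w' = b' # w''" using Cons.prems(2) by (cases w') auto
  have "is_lift N q" using Cons.prems(1) by (simp add: root_point_def)
  then have "b = b'"
    using Cons.prems(2) w' is_lift_mod_neq[OF \<open>is_lift N q\<close>] by (auto simp: pivot_def split: if_splits)
  then show ?case using Cons.IH[of "step q b" w''] Cons.prems w' by auto
qed

lemma move_path_pivots_iff:
  assumes "is_lift N q"
  shows "move_path N T (diag_of N q) (pivots N q w) d \<longleftrightarrow> root_walk N T q w \<and> d = diag_of N (walk q w)"
  using move_path_iff_root_walk[OF assms] pivots_inj by metis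

interpretation cfun: module "\<lambda>(c::complex) (f::'a \<Rightarrow> complex) x. c * f x"
  by unfold_locales (auto simp: fun_eq_iff algebra_simps)

lemma sum_fun_apply: "sum f A x = (\<Sum>a\<in>A. f a x)"
  by (induction A rule: infinite_finite_induct) auto

lemma cspan_eq_span: "cspan S = cfun.span S"
  unfolding cspan_def cfun.span_explicit by (auto simp: fun_eq_iff sum_fun_apply)

lemma span_sum_eval_eq_0:
  assumes "f \<in> cfun.span S" "\<And>g. g \<in> S \<Longrightarrow> (\<Sum>a\<in>A. g (h a)) = 0"
  shows "(\<Sum>a\<in>A. f (h a)) = 0"
  using assms(1)
proof (induction rule: cfun.span_induct_alt)
  case (step c g f)
  then show ?case using assms(2)[of g] by (simp add: sum.distrib sum_distrib_left[symmetric])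
qed simp

text \<open>The basis vector of the path with word \<open>w\<close>, or \<open>0\<close> if \<open>w\<close> leaves the positive roots or does not
  end at \<open>\<alpha>'\<close>; this is the convention by which \<^const>\<open>mesh_gens\<close> replaces invalid composites by zero.\<close>

definition path_vector :: "nat \<Rightarrow> nat set set \<Rightarrow> nat \<times> nat \<Rightarrow> nat set \<Rightarrow> bool list \<Rightarrow> nat list \<Rightarrow> complex"
  where "path_vector N T p \<alpha>' w =
    (if root_walk N T p w \<and> diag_of N (walk p w) = \<alpha>' then delta (pivots N p w) else 0)"

lemma path_vector_nonzero:
  "path_vector N T p \<alpha>' w \<noteq> 0 \<Longrightarrow> root_walk N T p w \<and> diag_of N (walk p w) = \<alpha>'"
  by (auto simp: path_vector_def split: if_splits)

lemma path_vector_apply: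
  "path_vector N T p \<alpha>' w (pivots N p w') =
    (if w' = w \<and> root_walk N T p w \<and> diag_of N (walk p w) = \<alpha>' then 1 else 0)"
  using pivots_inj[of N T p w w'] by (auto simp: path_vector_def delta_def)

lemma move_path_path_vector:
  assumes "is_lift N p"
  shows "(if move_path N T (diag_of N p) (pivots N p w) \<alpha>' then delta (pivots N p w) x else 0)
    = path_vector N T p \<alpha>' w x"
  by (auto simp: path_vector_def move_path_pivots_iff[OF assms])

lemma pivots_adjacent_pair:
  "pivots N p (u @ [c, \<not> c] @ v) = pivots N p u
     @ [pivot N (walk p u) c, Suc (pivot N (walk p u) (\<not> c)) mod N] @ pivots N (walk p (u @ [c, \<not> c])) v"
  by (cases c) (simp_all add: pivots_append walk_append pivot_def step_def mod_Suc_eq)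

lemma walk_adjacent_swap: "walk p (u @ [\<not> c, c] @ v) = walk p (u @ [c, \<not> c] @ v)"
  by (simp add: walk_def)

lemma diag_of_walk_pair:
  "diag_of N (walk q [c, \<not> c]) = {Suc (pivot N q c) mod N, Suc (pivot N q (\<not> c)) mod N}"
  by (cases c) (auto simp: diag_of_def pivot_def walk_def mod_Suc_eq)

lemma is_lift_walk_pair: "is_lift N q \<Longrightarrow> is_lift N (walk q [c, \<not> c])"
  by (simp add: is_lift_def walk_def)

lemma mesh_gensE:
  assumes "is_lift N p" "g \<in> mesh_gens N T (diag_of N p) \<alpha>'"
  obtains u c v where
    "g = path_vector N T p \<alpha>' (u @ [c, \<not> c] @ v) - path_vector N T p \<alpha>' (u @ [\<not> c, c] @ v)"
proof -
  obtain ps qs a b where ab: "a \<noteq> b" "move_path N T (diag_of N p) ps {a, b}"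
      "move_path N T {Suc a mod N, Suc b mod N} qs \<alpha>'"
    and g: "g = (\<lambda>x. (if move_path N T (diag_of N p) (ps @ [a, Suc b mod N] @ qs) \<alpha>'
                   then delta (ps @ [a, Suc b mod N] @ qs) x else 0)
                - (if move_path N T (diag_of N p) (ps @ [b, Suc a mod N] @ qs) \<alpha>'
                   then delta (ps @ [b, Suc a mod N] @ qs) x else 0))"
    using assms(2) unfolding mesh_gens_def by blast
  obtain u where u: "ps = pivots N p u" "root_walk N T p u" "{a, b} = diag_of N (walk p u)"
    using ab(2) move_path_iff_root_walk[OF assms(1)] by blast
  define q where "q = walk p u"
  obtain c where c: "a = pivot N q c" "b = pivot N q (\<not> c)"
    using u(3) ab(1) diag_of_pivots[of N q True] unfolding q_def[symmetric]
    by (cases "a = pivot N q True") (auto simp: doubleton_eq_iff)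
  have "is_lift N q" using root_walk_walk[OF u(2)] by (simp add: q_def root_point_def)
  then obtain v where v: "qs = pivots N (walk q [c, \<not> c]) v"
    using ab(3) move_path_iff_root_walk[OF is_lift_walk_pair] diag_of_walk_pair c by metis
  have P: "ps @ [a, Suc b mod N] @ qs = pivots N p (u @ [c, \<not> c] @ v)"
    "ps @ [b, Suc a mod N] @ qs = pivots N p (u @ [\<not> c, c] @ v)"
    using pivots_adjacent_pair[of N p u c v] pivots_adjacent_pair[of N p u "\<not> c" v]
      walk_adjacent_swap[of p u c "[]"]
    unfolding u(1) v c q_def by (simp_all add: walk_append)
  show thesis
  proof (rule that)
    show "g = path_vector N T p \<alpha>' (u @ [c, \<not> c] @ v) - path_vector N T p \<alpha>' (u @ [\<not> c, c] @ v)"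
      unfolding g P move_path_path_vector[OF assms(1)] fun_diff_def ..
  qed
qed

lemma mesh_gens_adjacent_swap:
  assumes "is_lift N p" "root_walk N T p (u @ [c, \<not> c] @ v)"
    and "diag_of N (walk p (u @ [c, \<not> c] @ v)) = \<alpha>'"
  shows "path_vector N T p \<alpha>' (u @ [c, \<not> c] @ v) - path_vector N T p \<alpha>' (u @ [\<not> c, c] @ v)
    \<in> mesh_gens N T (diag_of N p) \<alpha>'"
proof -
  define q where "q = walk p u"
  define a where "a = pivot N q c"
  define b where "b = pivot N q (\<not> c)"
  define ps where "ps = pivots N p u"
  define qs where "qs = pivots N (walk q [c, \<not> c]) v"
  have walks: "root_walk N T p u" "root_walk N T (walk q [c, \<not> c]) v"
    using assms(2) unfolding root_walk_append q_def by (simp_all add: walk_append)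
  have "is_lift N q" using root_walk_walk[OF walks(1)] by (simp add: q_def root_point_def)
  have P: "pivots N p (u @ [c, \<not> c] @ v) = ps @ [a, Suc b mod N] @ qs"
    "pivots N p (u @ [\<not> c, c] @ v) = ps @ [b, Suc a mod N] @ qs"
    using pivots_adjacent_pair[of N p u c v] pivots_adjacent_pair[of N p u "\<not> c" v]
      walk_adjacent_swap[of p u c "[]"]
    unfolding a_def b_def q_def ps_def qs_def by (simp_all add: walk_append)
  have "a \<noteq> b" using \<open>is_lift N q\<close> unfolding a_def b_def
    by (cases c) (auto simp: pivot_def dest: is_lift_mod_neq)
  moreover have "move_path N T (diag_of N p) ps {a, b}"
    using walks(1) diag_of_pivots[of N q c]
    unfolding a_def b_def q_def ps_def move_path_pivots_iff[OF assms(1)] by simp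
  moreover have "move_path N T {Suc a mod N, Suc b mod N} qs \<alpha>'"
    using walks(2) assms(3) move_path_pivots_iff[OF is_lift_walk_pair[OF \<open>is_lift N q\<close>]]
    unfolding a_def b_def diag_of_walk_pair[symmetric] q_def qs_def by (simp add: walk_append)
  moreover have "path_vector N T p \<alpha>' (u @ [c, \<not> c] @ v) - path_vector N T p \<alpha>' (u @ [\<not> c, c] @ v) =
    (\<lambda>x. (if move_path N T (diag_of N p) (ps @ [a, Suc b mod N] @ qs) \<alpha>'
           then delta (ps @ [a, Suc b mod N] @ qs) x else 0)
       - (if move_path N T (diag_of N p) (ps @ [b, Suc a mod N] @ qs) \<alpha>'
           then delta (ps @ [b, Suc a mod N] @ qs) x else 0))"
    unfolding P[symmetric] move_path_path_vector[OF assms(1)] fun_diff_def ..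
  ultimately show ?thesis unfolding mesh_gens_def by blast
qed

fun inversions :: "bool \<Rightarrow> bool list \<Rightarrow> nat" where
  "inversions c [] = 0"
| "inversions c (b # u) = (if b = c then 0 else count_list u c) + inversions c u"

definition canonical_word :: "bool \<Rightarrow> bool list \<Rightarrow> bool list" where
  "canonical_word c u = replicate (count_list u c) c @ replicate (count_list u (\<not> c)) (\<not> c)"

lemma count_list_replicate: "count_list (replicate n x) y = (if x = y then n else 0)"
  by (induction n) auto

lemma inversions_append:
  "inversions c (u @ v) = inversions c u + inversions c v + count_list u (\<not> c) * count_list v c"
  by (induction u) auto

lemma inversions_adjacent_swap:
  "inversions c (u @ [c, \<not> c] @ v) < inversions c (u @ [\<not> c, c] @ v)"
  by (simp add: inversions_append)

lemma canonical_word_adjacent_swap: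
  "canonical_word c (u @ [c, \<not> c] @ v) = canonical_word c (u @ [\<not> c, c] @ v)"
  by (simp add: canonical_word_def)

lemma inversions_eq_0_imp_canonical: "inversions c u = 0 \<Longrightarrow> canonical_word c u = u"
proof (induction u)
  case (Cons b u)
  then have "canonical_word c u = u" "b = c \<or> count_list u c = 0" by (auto split: if_splits)
  then show ?case by (cases b; cases c) (auto simp: canonical_word_def)
qed (simp add: canonical_word_def)

lemma inversions_neq_0_imp_descent:
  "inversions c u \<noteq> 0 \<Longrightarrow> \<exists>u1 u2. u = u1 @ [\<not> c, c] @ u2"
proof (induction u)
  case (Cons b u)
  show ?case
  proof (cases "inversions c u = 0")
    case True
    then have u: "canonical_word c u = u" by (rule inversions_eq_0_imp_canonical)
    obtain k where k: "count_list u c = Suc k" and b: "b = (\<not> c)"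
      using Cons.prems True by (cases "count_list u c") (auto split: if_splits)
    have "u = replicate (Suc k) c @ replicate (count_list u (\<not> c)) (\<not> c)"
      using u unfolding canonical_word_def k by simp
    then have "b # u = [] @ [\<not> c, c] @ replicate k c @ replicate (count_list u (\<not> c)) (\<not> c)"
      using b by simp
    then show ?thesis by blast
  next
    case False
    then obtain u1 u2 where "u = u1 @ [\<not> c, c] @ u2" using Cons.IH by blast
    then show ?thesis by (metis append_Cons)
  qed
qed simp

lemma path_vector_sort:
  assumes "is_lift N p"
  shows "path_vector N T p \<alpha>' (pre @ u @ suf) \<in> cfun.span (mesh_gens N T (diag_of N p) \<alpha>')
    \<or> path_vector N T p \<alpha>' (pre @ u @ suf) - path_vector N T p \<alpha>' (pre @ canonical_word c u @ suf)
        \<in> cfun.span (mesh_gens N T (diag_of N p) \<alpha>')"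
proof (induction "inversions c u" arbitrary: u rule: less_induct)
  case less
  let ?M = "cfun.span (mesh_gens N T (diag_of N p) \<alpha>')"
  let ?v = "\<lambda>u. path_vector N T p \<alpha>' (pre @ u @ suf)"
  show ?case
  proof (cases "inversions c u = 0")
    case True
    then show ?thesis using inversions_eq_0_imp_canonical cfun.span_zero by auto
  next
    case False
    then obtain u1 u2 where u: "u = u1 @ [\<not> c, c] @ u2"
      using inversions_neq_0_imp_descent by blast
    define u' where "u' = u1 @ [c, \<not> c] @ u2"
    show ?thesis
    proof (cases "?v u = 0")
      case False
      then have "?v u - ?v u' \<in> ?M"
        using mesh_gens_adjacent_swap[OF assms, of T "pre @ u1" "\<not> c" "u2 @ suf" \<alpha>']
          path_vector_nonzero[of N T p \<alpha>' "pre @ u @ suf"]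
        unfolding u u'_def by (simp add: cfun.span_base)
      moreover have "inversions c u' < inversions c u" "canonical_word c u' = canonical_word c u"
        unfolding u u'_def
        using inversions_adjacent_swap canonical_word_adjacent_swap by simp_all
      then have "?v u' \<in> ?M \<or> ?v u' - ?v (canonical_word c u) \<in> ?M"
        using less.hyps by metis
      ultimately show ?thesis
        using cfun.span_add[of "?v u - ?v u'" _ "?v u'"]
          cfun.span_add[of "?v u - ?v u'" _ "?v u' - ?v (canonical_word c u)"] by auto
    qed (simp add: cfun.span_zero)
  qed
qed

definition root_rectangle :: "nat \<Rightarrow> nat set set \<Rightarrow> nat \<times> nat \<Rightarrow> nat \<Rightarrow> nat \<Rightarrow> bool" where
  "root_rectangle N T p i j \<longleftrightarrow> (\<forall>i'\<le>i. \<forall>j'\<le>j. root_point N T (fst p + i', snd p + j'))"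

lemma root_rectangle_root_walk:
  "root_rectangle N T p i j \<Longrightarrow> count_list w True \<le> i \<Longrightarrow> count_list w False \<le> j \<Longrightarrow> root_walk N T p w"
proof (induction w arbitrary: p i j)
  case Nil
  then show ?case unfolding root_rectangle_def by (metis add_0_right le0 root_walk.simps(1) prod.collapse)
next
  case (Cons b w)
  have "root_point N T p" using Cons.prems(1) unfolding root_rectangle_def by (metis add_0_right le0 prod.collapse)
  moreover have "root_rectangle N T (step p b) (if b then i - 1 else i) (if b then j else j - 1)"
    using Cons.prems unfolding root_rectangle_def step_def
    by (auto simp: le_diff_conv2 split: if_splits) (metis add_Suc_right Suc_leI)
  ultimately show ?case using Cons by (cases b) auto
qed

lemma root_rectangle_is_lift: "root_rectangle N T p i j \<Longrightarrow> is_lift N p"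
  unfolding root_rectangle_def root_point_def by (metis add_0_right le0 prod.collapse)

lemma root_rectangle_bounds:
  "root_rectangle N T p i j \<Longrightarrow> fst p + i + 2 \<le> snd p \<and> snd p + j + 2 \<le> fst p + N"
  unfolding root_rectangle_def root_point_def is_lift_def
  by (metis add.right_neutral fst_conv le0 order_refl snd_conv)

text \<open>If the rectangle spanned by a path contained a non-root point, sorting the path and then
  re-sorting a block of it would produce a mesh-equivalent path through that point, which
  vanishes.\<close>

lemma root_rectangle_of_path_vector_notin_span:
  assumes "is_lift N p" "path_vector N T p \<alpha>' w \<notin> cfun.span (mesh_gens N T (diag_of N p) \<alpha>')"
  shows "root_rectangle N T p (count_list w True) (count_list w False)"
  unfolding root_rectangle_def
proof (intro allI impI, rule ccontr)
  let ?M = "cfun.span (mesh_gens N T (diag_of N p) \<alpha>')"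
  let ?v = "path_vector N T p \<alpha>'"
  fix i' j' assume le: "i' \<le> count_list w True" "j' \<le> count_list w False"
    and bad: "\<not> root_point N T (fst p + i', snd p + j')"
  define i where "i = count_list w True"
  define j where "j = count_list w False"
  define pre where "pre = replicate i' True"
  define u where "u = replicate (i - i') True @ replicate j' False"
  define suf where "suf = replicate (j - j') False"
  have "?v w - ?v (canonical_word True w) \<in> ?M"
    using path_vector_sort[OF assms(1), of T \<alpha>' "[]" w "[]" True] assms(2) by simp
  moreover have sorted: "canonical_word True w = pre @ u @ suf"
    using le unfolding canonical_word_def pre_def u_def suf_def i_def j_def
    by (simp flip: replicate_add)
  have "\<not> root_walk N T p (pre @ canonical_word False u @ suf)"
  proof
    assume "root_walk N T p (pre @ canonical_word False u @ suf)"
    then have "root_walk N T p (pre @ replicate j' False)"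
      by (simp add: canonical_word_def u_def count_list_replicate root_walk_append)
    then show False
      using root_walk_walk bad by (fastforce simp: pre_def walk_def count_list_replicate)
  qed
  then have "?v (canonical_word True w) \<in> ?M"
    using path_vector_sort[OF assms(1), of T \<alpha>' pre u suf False] sorted
    by (simp add: path_vector_def)
  ultimately show False
    using assms(2) cfun.span_add by fastforce
qed

lemma length_eq_count_list_bool: "length w = count_list w True + count_list w False"
  by (induction w) auto

text \<open>Conversely, summing the coefficients of all paths in a rectangle of roots is a linear form
  that vanishes on the mesh relations but not on a path.\<close>

lemma path_vector_notin_span_of_root_rectangle:
  assumes rect: "root_rectangle N T p i j" and w: "count_list w True = i" "count_list w False = j"
  defines "\<alpha>' \<equiv> diag_of N (fst p + i, snd p + j)"
  shows "path_vector N T p \<alpha>' w \<notin> cfun.span (mesh_gens N T (diag_of N p) \<alpha>')"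
proof
  define W where "W = {w. count_list w True = i \<and> count_list w False = j}"
  have "W \<subseteq> {w. set w \<subseteq> UNIV \<and> length w = i + j}"
    unfolding W_def using length_eq_count_list_bool by auto
  then have fin: "finite W" using finite_lists_length_eq[of "UNIV :: bool set"] finite_subset by auto
  have valid: "root_walk N T p w' \<and> diag_of N (walk p w') = \<alpha>'" if "w' \<in> W" for w'
    using that root_rectangle_root_walk[OF rect] unfolding W_def \<alpha>'_def walk_def by simp
  have eval: "(\<Sum>w'\<in>W. path_vector N T p \<alpha>' u (pivots N p w')) = (if u \<in> W then 1 else 0)" for u
  proof -
    let ?c = "if root_walk N T p u \<and> diag_of N (walk p u) = \<alpha>' then 1 else 0 :: complex"
    have "(\<Sum>w'\<in>W. path_vector N T p \<alpha>' u (pivots N p w')) = (\<Sum>w'\<in>W. if w' = u then ?c else 0)"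
      by (intro sum.cong) (auto simp: path_vector_apply)
    also have "\<dots> = (if u \<in> W then 1 else 0)" using fin valid by simp
    finally show ?thesis .
  qed
  have "(\<Sum>w'\<in>W. g (pivots N p w')) = 0" if g: "g \<in> mesh_gens N T (diag_of N p) \<alpha>'" for g
  proof -
    obtain u c v where "g = path_vector N T p \<alpha>' (u @ [c, \<not> c] @ v) - path_vector N T p \<alpha>' (u @ [\<not> c, c] @ v)"
      using mesh_gensE[OF root_rectangle_is_lift[OF rect] g] .
    then show ?thesis using eval by (simp add: sum_subtractf W_def)
  qed
  moreover assume "path_vector N T p \<alpha>' w \<in> cfun.span (mesh_gens N T (diag_of N p) \<alpha>')"
  ultimately have "(\<Sum>w'\<in>W. path_vector N T p \<alpha>' w (pivots N p w')) = 0"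
    by (rule span_sum_eval_eq_0[rotated])
  then show False using eval w unfolding W_def by simp
qed

lemma not_crosses_nested:
  fixes a s t h1 h2 N :: nat
  assumes "\<not> crosses N {s mod N, t mod N} {h1 mod N, h2 mod N}"
    and "a \<le> s" "t < a + N" "a \<le> h2" "h2 < a + N" "s < h1" "h1 < t"
  shows "s \<le> h2 \<and> h2 \<le> t"
  using assms crosses_mod_iff_interleave[of a s t N h1 h2] by auto

text \<open>Let \<open>E\<close> (resp. \<open>F\<close>) be the farthest endpoint in \<open>[c, d]\<close> (resp. \<open>[a, b]\<close>) of a diagonal of \<open>T\<close>
  issuing from the open arc \<open>(b, c)\<close>.  Some diagonal of \<open>T\<close> crosses \<open>{F, E}\<close>; not crossing the
  diagonals that end at \<open>E\<close> and \<open>F\<close>, it starts in \<open>(b, c)\<close>, and by extremality of \<open>E\<close> and \<open>F\<close> it ends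
  in \<open>(d, a + N)\<close>.\<close>

lemma triangulation_diagonal_beyond_rectangle:
  fixes a b c d N :: nat
  assumes tri: "triangulation N T" and "a \<le> b" "b + 2 \<le> c" "c \<le> d" "d + 2 \<le> a + N"
    and rect: "\<And>x y. a \<le> x \<Longrightarrow> x \<le> b \<Longrightarrow> c \<le> y \<Longrightarrow> y \<le> d \<Longrightarrow> diag_of N (x, y) \<notin> T"
  shows "\<exists>q s. b < q \<and> q < c \<and> d < s \<and> s < a + N \<and> {q mod N, s mod N} \<in> T"
proof -
  have diagT: "\<And>e. e \<in> T \<Longrightarrow> is_diag N e" and nc: "\<And>e f. e \<in> T \<Longrightarrow> f \<in> T \<Longrightarrow> \<not> crosses N e f"
    and maximal: "\<And>e. is_diag N e \<Longrightarrow> e \<notin> T \<Longrightarrow> \<exists>f\<in>T. crosses N e f"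
    using tri unfolding triangulation_def by blast+
  define fan where "fan s \<longleftrightarrow> (\<exists>q. b < q \<and> q < c \<and> {q mod N, s mod N} \<in> T)" for s
  define E where "E = Max (insert c {y. c < y \<and> y \<le> d \<and> fan y})"
  define F where "F = Min (insert b {x. a \<le> x \<and> x < b \<and> fan x})"
  have finE: "finite (insert c {y. c < y \<and> y \<le> d \<and> fan y})"
    by (rule finite_subset[of _ "{..d}"]) (use assms(4) in auto)
  have finF: "finite (insert b {x. a \<le> x \<and> x < b \<and> fan x})"
    by (rule finite_subset[of _ "{..b}"]) auto
  have E: "c \<le> E" "E \<le> d" "E = c \<or> fan E" "\<And>y. c < y \<Longrightarrow> y \<le> d \<Longrightarrow> fan y \<Longrightarrow> y \<le> E"
    using Max_in[OF finE] Max_ge[OF finE] assms(4) unfolding E_def by auto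
  have F: "a \<le> F" "F \<le> b" "F = b \<or> fan F" "\<And>x. a \<le> x \<Longrightarrow> x < b \<Longrightarrow> fan x \<Longrightarrow> F \<le> x"
    using Min_in[OF finF] Min_le[OF finF] assms(2) unfolding F_def by auto
  have "is_diag N (diag_of N (F, E))"
    using is_diag_diag_of_iff[of "(F, E)" N] E(1,2) F(1,2) assms(2-5) by (simp add: is_lift_def)
  moreover have "diag_of N (F, E) \<notin> T" using rect E(1,2) F(1,2) by blast
  ultimately obtain h where h: "h \<in> T" "crosses N (diag_of N (F, E)) h" using maximal by blast
  obtain s t where st: "a \<le> s" "s < t" "t < a + N" "h = {s mod N, t mod N}"
    using is_diag_lift_in_window[OF diagT[OF h(1)]] by blast
  have "(F < s \<and> s < E \<and> (t < F \<or> E < t)) \<or> (F < t \<and> t < E \<and> (s < F \<or> E < s))"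
    using h(2) st crosses_mod_iff_interleave[of a F E N s t] E(1,2) F(1,2) assms(2-5)
    by (simp add: diag_of_def)
  then obtain h1 h2 where hh: "a \<le> h1" "h1 < a + N" "a \<le> h2" "h2 < a + N" "h = {h1 mod N, h2 mod N}"
    "F < h1" "h1 < E" "h2 < F \<or> E < h2"
  proof (elim disjE)
    assume "F < s \<and> s < E \<and> (t < F \<or> E < t)"
    then show thesis using that[of s t] st by auto
  next
    assume "F < t \<and> t < E \<and> (s < F \<or> E < s)"
    then show thesis using that[of t s] st by (auto simp: insert_commute)
  qed
  have "b < h1"
  proof (cases "F = b")
    case False
    then obtain q where q: "b < q" "q < c" "{F mod N, q mod N} \<in> T"
      using F(3) unfolding fan_def by (auto simp: insert_commute)
    have "\<not> h1 < q"
    proof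
      assume "h1 < q"
      moreover have "q < a + N" using q(2) E(1,2) assms(5) by linarith
      ultimately have "F \<le> h2 \<and> h2 \<le> q"
        using not_crosses_nested[of N F q h1 h2 a] nc[OF q(3) h(1)] hh F(1) by simp
      then show False using hh(8) q(2) E(1) by simp
    qed
    then show ?thesis using q(1) by simp
  qed (use hh(6) in simp)
  have "h1 < c"
  proof (cases "E = c")
    case False
    then obtain q where q: "b < q" "q < c" "{q mod N, E mod N} \<in> T"
      using E(3) unfolding fan_def by blast
    have "\<not> q < h1"
    proof
      assume "q < h1"
      moreover have "a \<le> q" "E < a + N" using q(1) F(1,2) E(2) assms(5) by linarith+
      ultimately have "q \<le> h2 \<and> h2 \<le> E"
        using not_crosses_nested[of N q E h1 h2 a] nc[OF q(3) h(1)] hh by simp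
      then show False using hh(8) q(1) F(2) by simp
    qed
    then show ?thesis using q(2) by simp
  qed (use hh(7) in simp)
  have "fan h2" unfolding fan_def using \<open>b < h1\<close> \<open>h1 < c\<close> h(1) hh(5) by blast
  then have "d < h2"
    using hh(3,8) E(1) E(4)[of h2] F(2) F(4)[of h2] by fastforce
  then show ?thesis using \<open>b < h1\<close> \<open>h1 < c\<close> hh h(1) by blast
qed

lemma is_diag_mem_less: "is_diag N d \<Longrightarrow> x \<in> d \<Longrightarrow> x < N"
  unfolding is_diag_def by auto

lemma cpos_mod_before: "z < s \<Longrightarrow> s < z + N \<Longrightarrow> cpos N (s mod N) (z mod N) = z + N - s"
  using cpos_mod_in_window[of s s N "z + N"] by simp

lemma root_rectangle_hom_criterion:
  assumes tri: "triangulation N T" and rect: "root_rectangle N T p i j"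
  shows "hom_criterion N T (diag_of N p) (diag_of N (fst p + i, snd p + j))"
proof -
  obtain x y where p: "p = (x, y)" by (cases p)
  have bounds: "x + i + 2 \<le> y" "y + j + 2 \<le> x + N" using root_rectangle_bounds[OF rect] p by auto
  have "diag_of N (x', y') \<notin> T" if "x \<le> x'" "x' \<le> x + i" "y \<le> y'" "y' \<le> y + j" for x' y'
    using rect[unfolded root_rectangle_def, rule_format, of "x' - x" "y' - y"] that
    unfolding p root_point_def by simp
  then obtain q s where qs: "x + i < q" "q < y" "y + j < s" "s < x + N" "{q mod N, s mod N} \<in> T"
    using triangulation_diagonal_beyond_rectangle[OF tri, of x "x + i" y "y + j"] bounds by fastforce
  define I where "I = {q mod N, s mod N}"
  have "crosses N I (diag_of N p)" "crosses N I (diag_of N (fst p + i, snd p + j))"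
    unfolding I_def p diag_of_def
    using crosses_mod_iff_interleave[of x q s N x y] crosses_mod_iff_interleave[of x q s N "x + i" "y + j"]
      qs bounds by auto
  then have supp: "I \<in> supp N T (diag_of N p) \<inter> supp N T (diag_of N (fst p + i, snd p + j))"
    unfolding supp_def I_def using qs(5) by simp
  have cpos: "cpos N (s mod N) (x mod N) = x + N - s" "cpos N (s mod N) ((x + i) mod N) = x + i + N - s"
    "cpos N (s mod N) (q mod N) = q + N - s" "cpos N (s mod N) (y mod N) = y + N - s"
    "cpos N (s mod N) ((y + j) mod N) = y + j + N - s"
    using qs bounds by (simp_all add: cpos_mod_before)
  have I: "I = {s mod N, q mod N}" unfolding I_def by blast
  show ?thesis
    unfolding hom_criterion_def
    apply (rule bexI[of _ I], rule exI[of _ "s mod N"], rule exI[of _ "q mod N"], rule exI[of _ "x mod N"],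
        rule exI[of _ "y mod N"], rule exI[of _ "(x + i) mod N"], rule exI[of _ "(y + j) mod N"])
    using I supp cpos qs bounds by (auto simp: diag_of_def p)
qed

lemma hom_criterion_root_rectangle:
  assumes tri: "triangulation N T" and "pos_root N T \<alpha>" "pos_root N T \<alpha>'"
    and "hom_criterion N T \<alpha> \<alpha>'"
  obtains p i j where "diag_of N p = \<alpha>" "root_rectangle N T p i j" "diag_of N (fst p + i, snd p + j) = \<alpha>'"
proof -
  obtain I v1 v2 u1 u2 u1' u2' where I: "I \<in> T" "crosses N I \<alpha>" "I = {v1, v2}"
    and \<alpha>: "\<alpha> = {u1, u2}" "\<alpha>' = {u1', u2'}"
    and ineq: "0 < cpos N v1 u1" "cpos N v1 u1 \<le> cpos N v1 u1'" "cpos N v1 u1' < cpos N v1 v2"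
      "cpos N v1 v2 < cpos N v1 u2" "cpos N v1 u2 \<le> cpos N v1 u2'"
    using assms(4) unfolding hom_criterion_def supp_def by blast
  have "is_diag N I" using tri I(1) unfolding triangulation_def by blast
  then have less_N: "z < N" if "z \<in> {v1, v2, u1, u2, u1', u2'}" for z
    using that I(3) assms(2,3) \<alpha> unfolding pos_root_def by (auto dest: is_diag_mem_less)
  have "0 < N" using less_N[of v1] by simp
  define cp where "cp = cpos N v1"
  define p where "p = (v1 + cp u1, v1 + cp u2)"
  define i where "i = cp u1' - cp u1"
  define j where "j = cp u2' - cp u2"
  note ineq = ineq[folded cp_def]
  have cp_N: "cp u2' < N" unfolding cp_def using cpos_less \<open>0 < N\<close> by blast
  have corners: "fst p = v1 + cp u1" "snd p = v1 + cp u2" "fst p + i = v1 + cp u1'" "snd p + j = v1 + cp u2'"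
    using ineq by (simp_all add: p_def i_def j_def)
  have lift: "(v1 + cp z) mod N = z" if "z \<in> {v1, v2, u1, u2, u1', u2'}" for z
    unfolding cp_def using add_cpos_mod less_N that by simp
  have I': "I = {v1 mod N, (v1 + cp v2) mod N}" using I(3) lift[of v2] less_N[of v1] by simp
  have "diag_of N p = \<alpha>" "diag_of N (fst p + i, snd p + j) = \<alpha>'"
    using lift corners unfolding diag_of_def \<alpha> by (simp_all add: add.assoc)
  moreover have "root_rectangle N T p i j" unfolding root_rectangle_def
  proof (intro allI impI)
    fix i' j' assume le: "i' \<le> i" "j' \<le> j"
    define x where "x = fst p + i'"
    define y where "y = snd p + j'"
    have r: "v1 < x" "x < v1 + cp v2" "v1 + cp v2 < y" "y < v1 + N"
      using le ineq cp_N corners unfolding x_def y_def by linarith+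
    then have "is_lift N (x, y)" unfolding is_lift_def by auto
    moreover have "crosses N I (diag_of N (x, y))"
      unfolding I' diag_of_def using crosses_mod_iff_interleave[of v1 v1 "v1 + cp v2" N x y] r by auto
    then have "diag_of N (x, y) \<notin> T" using tri I(1) unfolding triangulation_def by blast
    ultimately show "root_point N T (fst p + i', snd p + j')"
      unfolding root_point_def x_def y_def by simp
  qed
  ultimately show thesis using that by blast
qed

lemma root_rectangle_corner_inj:
  assumes "root_rectangle N T p i1 j1" "root_rectangle N T p i2 j2"
    and "diag_of N (fst p + i1, snd p + j1) = diag_of N (fst p + i2, snd p + j2)"
  shows "i1 = i2 \<and> j1 = j2"
proof -
  obtain x y where p: "p = (x, y)" by (cases p)
  have "x + i1 + 2 \<le> y" "y + j1 + 2 \<le> x + N" "x + i2 + 2 \<le> y" "y + j2 + 2 \<le> x + N"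
    using root_rectangle_bounds[OF assms(1)] root_rectangle_bounds[OF assms(2)] p by auto
  then show ?thesis
    using assms(3) mod_eq_iff_eq_in_window[of x "x + i1" N "x + i2"]
      mod_eq_iff_eq_in_window[of x "y + j1" N "y + j2"] mod_eq_iff_eq_in_window[of x "x + i1" N "y + j2"]
    unfolding diag_of_def p by (auto simp: doubleton_eq_iff)
qed

lemma hom_nonzero_imp_hom_criterion:
  assumes tri: "triangulation N T" and "pos_root N T \<alpha>" "hom_nonzero N T \<alpha> \<alpha>'"
  shows "hom_criterion N T \<alpha> \<alpha>'"
proof -
  obtain ps where ps: "move_path N T \<alpha> ps \<alpha>'" "delta ps \<notin> cspan (mesh_gens N T \<alpha> \<alpha>')"
    using assms(3) unfolding hom_nonzero_def by blast
  obtain p where p: "is_lift N p" "diag_of N p = \<alpha>" using pos_root_has_lift[OF assms(2)] .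
  obtain w where w: "ps = pivots N p w" "root_walk N T p w" "\<alpha>' = diag_of N (walk p w)"
    using ps(1) move_path_iff_root_walk[OF p(1)] p(2) by blast
  have "delta ps = path_vector N T p \<alpha>' w" using w by (simp add: path_vector_def)
  then have "root_rectangle N T p (count_list w True) (count_list w False)"
    using root_rectangle_of_path_vector_notin_span[OF p(1)] ps(2) p(2) by (simp add: cspan_eq_span)
  then have "hom_criterion N T (diag_of N p) (diag_of N (walk p w))"
    unfolding walk_def by (rule root_rectangle_hom_criterion[OF tri])
  then show ?thesis using w(3) p(2) by simp
qed

lemma hom_dim_eq_1I:
  assumes "move_path N T \<alpha> ps0 \<alpha>'" "delta ps0 \<notin> cspan (mesh_gens N T \<alpha> \<alpha>')"
    and "\<And>ps. move_path N T \<alpha> ps \<alpha>' \<Longrightarrow> delta ps \<in> cspan (insert (delta ps0) (mesh_gens N T \<alpha> \<alpha>'))"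
  shows "hom_dim N T \<alpha> \<alpha>' = 1"
  unfolding hom_dim_def
proof (rule Least_equality)
  show "\<exists>S. finite S \<and> card S = 1 \<and> (\<forall>s\<in>S. move_path N T \<alpha> s \<alpha>') \<and>
      (\<forall>ps. move_path N T \<alpha> ps \<alpha>' \<longrightarrow> delta ps \<in> cspan (delta ` S \<union> mesh_gens N T \<alpha> \<alpha>'))"
    using assms(1,3) by (intro exI[of _ "{ps0}"]) auto
next
  fix k assume "\<exists>S. finite S \<and> card S = k \<and> (\<forall>s\<in>S. move_path N T \<alpha> s \<alpha>') \<and>
      (\<forall>ps. move_path N T \<alpha> ps \<alpha>' \<longrightarrow> delta ps \<in> cspan (delta ` S \<union> mesh_gens N T \<alpha> \<alpha>'))"
  then obtain S where "finite S" "card S = k"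
    "\<forall>ps. move_path N T \<alpha> ps \<alpha>' \<longrightarrow> delta ps \<in> cspan (delta ` S \<union> mesh_gens N T \<alpha> \<alpha>')" by blast
  then show "1 \<le> k" using assms(1,2) by (cases "S = {}") (auto simp: Suc_le_eq card_gt_0_iff)
qed

lemma hom_criterion_imp_generator:
  assumes "triangulation N T" "pos_root N T \<alpha>" "pos_root N T \<alpha>'" "hom_criterion N T \<alpha> \<alpha>'"
  obtains ps0 where "move_path N T \<alpha> ps0 \<alpha>'" "delta ps0 \<notin> cspan (mesh_gens N T \<alpha> \<alpha>')"
    "\<And>ps. move_path N T \<alpha> ps \<alpha>' \<Longrightarrow> delta ps \<in> cspan (insert (delta ps0) (mesh_gens N T \<alpha> \<alpha>'))"
proof -
  obtain p i j where p: "diag_of N p = \<alpha>" "root_rectangle N T p i j" "diag_of N (fst p + i, snd p + j) = \<alpha>'"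
    using hom_criterion_root_rectangle[OF assms] .
  have lift: "is_lift N p" using root_rectangle_is_lift[OF p(2)] .
  let ?M = "cfun.span (mesh_gens N T \<alpha> \<alpha>')"
  define w0 where "w0 = replicate i True @ replicate j False"
  define ps0 where "ps0 = pivots N p w0"
  have w0: "count_list w0 True = i" "count_list w0 False = j"
    by (simp_all add: w0_def count_list_replicate)
  then have valid0: "root_walk N T p w0 \<and> diag_of N (walk p w0) = \<alpha>'"
    using root_rectangle_root_walk[OF p(2)] p(3) by (simp add: walk_def)
  then have v0: "path_vector N T p \<alpha>' w0 = delta ps0" by (simp add: path_vector_def ps0_def)
  have "move_path N T \<alpha> ps0 \<alpha>'"
    using valid0 p(1) move_path_pivots_iff[OF lift] by (simp add: ps0_def)
  moreover have "delta ps0 \<notin> ?M"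
    using path_vector_notin_span_of_root_rectangle[OF p(2) w0] v0 p(1,3) by simp
  moreover have "delta ps \<in> cfun.span (insert (delta ps0) (mesh_gens N T \<alpha> \<alpha>'))"
    if ps: "move_path N T \<alpha> ps \<alpha>'" for ps
  proof (cases "delta ps \<in> ?M")
    case True
    then show ?thesis using cfun.span_mono[of "mesh_gens N T \<alpha> \<alpha>'"] by blast
  next
    case False
    obtain w where w: "ps = pivots N p w" "root_walk N T p w" "\<alpha>' = diag_of N (walk p w)"
      using ps move_path_iff_root_walk[OF lift] p(1) by blast
    have v: "delta ps = path_vector N T p \<alpha>' w" using w by (simp add: path_vector_def)
    have "root_rectangle N T p (count_list w True) (count_list w False)"
      using root_rectangle_of_path_vector_notin_span[OF lift] False v p(1) by simp
    then have "count_list w True = i \<and> count_list w False = j"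
      using root_rectangle_corner_inj[OF _ p(2)] w(3) p(3) by (simp add: walk_def)
    then have "canonical_word True w = w0" by (simp add: canonical_word_def w0_def)
    then have "delta ps - delta ps0 \<in> ?M"
      using path_vector_sort[OF lift, of T \<alpha>' "[]" w "[]" True] False v v0 p(1) by simp
    then have "delta ps - delta ps0 \<in> cfun.span (insert (delta ps0) (mesh_gens N T \<alpha> \<alpha>'))"
      using cfun.span_mono[of "mesh_gens N T \<alpha> \<alpha>'"] by blast
    moreover have "delta ps0 \<in> cfun.span (insert (delta ps0) (mesh_gens N T \<alpha> \<alpha>'))"
      by (simp add: cfun.span_base)
    ultimately show ?thesis using cfun.span_add by fastforce
  qed
  ultimately show thesis using that by (simp add: cspan_eq_span)
qed

theorem mainTheorem10:
  fixes n :: nat and T :: "nat set set" and \<alpha> \<alpha>' :: "nat set"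
  assumes "triangulation (n + 3) T"
    and "pos_root (n + 3) T \<alpha>" and "pos_root (n + 3) T \<alpha>'"
  shows "(hom_nonzero (n + 3) T \<alpha> \<alpha>' \<longleftrightarrow> hom_criterion (n + 3) T \<alpha> \<alpha>')
     \<and> (hom_criterion (n + 3) T \<alpha> \<alpha>' \<longrightarrow> hom_dim (n + 3) T \<alpha> \<alpha>' = 1)"
proof -
  have "hom_nonzero (n + 3) T \<alpha> \<alpha>' \<and> hom_dim (n + 3) T \<alpha> \<alpha>' = 1"
    if crit: "hom_criterion (n + 3) T \<alpha> \<alpha>'"
  proof -
    obtain ps0 where "move_path (n + 3) T \<alpha> ps0 \<alpha>'" "delta ps0 \<notin> cspan (mesh_gens (n + 3) T \<alpha> \<alpha>')"
      "\<And>ps. move_path (n + 3) T \<alpha> ps \<alpha>' \<Longrightarrow>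
        delta ps \<in> cspan (insert (delta ps0) (mesh_gens (n + 3) T \<alpha> \<alpha>'))"
      using hom_criterion_imp_generator[OF assms crit] by blast
    then show ?thesis unfolding hom_nonzero_def using hom_dim_eq_1I by blast
  qed
  then show ?thesis using hom_nonzero_imp_hom_criterion[OF assms(1,2)] by blast
qed

end
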